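(* Let $\mathcal R_0(p)_i=\sum_{k,\ell\ge0,\ \min\{k,\ell\}\le i\le\max\{k,\ell\}}\frac{p_kp_\ell}{1+|k-\ell|}$ for $p\in\mathcal M_1^+$. A probability measure $p\in\mathcal M_1^+$ is a fixed point of $\mathcal R_0$ if and only if its mean $m=\sum_{k\ge0}k\,p_k$ is finite, $p_{\lfloor m\rfloor}=\lfloor m\rfloor+1-m$, $p_{\lceil m\rceil}=m+1-\lceil m\rceil$, and $p_k=0$ for all other $k$ (including the case that $m$ is an integer and $p_m=1$).
   Context: $\mathcal M_1^+$ is the set of probability measures on $\mathbb N_0$, identified with nonnegative sequences $(p_k)_{k\ge0}$ summing to $1$. *)

theory Defs
  imports "HOL-Analysis.Analysis"
begin

definition prob_seq :: "(nat \<Rightarrow> real) \<Rightarrow> bool" where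
  "prob_seq p \<longleftrightarrow> (\<forall>k. p k \<ge> 0) \<and> p sums 1"

text \<open>The operator R_0; the double series has nonnegative terms bounded by p_k p_l,
  so it is (absolutely) summable for p a probability sequence.\<close>
definition R0 :: "(nat \<Rightarrow> real) \<Rightarrow> nat \<Rightarrow> real" where
  "R0 p i = (\<Sum>\<^sub>\<infinity>(k, l) \<in> {(k, l). min k l \<le> i \<and> i \<le> max k l}.
              p k * p l / (1 + \<bar>real k - real l\<bar>))"

end

theory Submission
  imports Defs
begin

(* A law p supported on two consecutive integers a, a + 1 is fixed by R_0: only the pairs
   (a, a), (a, a + 1), (a + 1, a) contribute, and the weight 1/2 of the two off-diagonal pairs
   returns p_a p_(a+1) in equal halves to a and a + 1.
   Conversely, let a be the least point of the support of a fixed point p. Only pairs with a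
   coordinate equal to a contribute to R_0(p)_a, so p_a = p_a (p_a + 2 S) with
   S = sum_(l>a) p_l / (1 + l - a). Hence sum_(l>a) 2 p_l / (1 + l - a) = 1 - p_a = sum_(l>a) p_l,
   and as 2 / (1 + l - a) < 1 for l >= a + 2, p vanishes there. The mean of such a law is
   a + p_(a+1), which turns the two-point condition into the floor/ceiling condition. *)

lemma R0_eq_sum_if_finite_support:
  assumes "finite S" and "\<And>k. k \<notin> S \<Longrightarrow> p k = 0"
  shows "R0 p i = (\<Sum>(k, l) \<in> {(k, l). min k l \<le> i \<and> i \<le> max k l} \<inter> S \<times> S.
                     p k * p l / (1 + \<bar>real k - real l\<bar>))"
proof -
  have "R0 p i = (\<Sum>\<^sub>\<infinity>(k, l) \<in> {(k, l). min k l \<le> i \<and> i \<le> max k l} \<inter> S \<times> S.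
                     p k * p l / (1 + \<bar>real k - real l\<bar>))"
    unfolding R0_def by (rule infsum_cong_neutral) (use assms(2) in force)+
  then show ?thesis
    using assms(1) by simp
qed

lemma sums_two_point_support:
  fixes f :: "nat \<Rightarrow> 'a::{t2_space, topological_comm_monoid_add}"
  assumes "\<And>k. k \<noteq> a \<Longrightarrow> k \<noteq> Suc a \<Longrightarrow> f k = 0"
  shows "f sums (f a + f (Suc a))"
  using sums_finite[of "{a, Suc a}" f] assms by auto

lemma prob_seq_two_point_mass:
  assumes "prob_seq p" and "\<And>k. k \<noteq> a \<Longrightarrow> k \<noteq> Suc a \<Longrightarrow> p k = 0"
  shows "p a + p (Suc a) = 1"
proof -
  have "p sums (p a + p (Suc a))"
    using assms(2) by (rule sums_two_point_support)
  then show ?thesis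
    using assms(1) sums_unique2 by (auto simp: prob_seq_def)
qed

lemma R0_fixed_if_two_point_support:
  assumes "\<And>k. k \<noteq> a \<Longrightarrow> k \<noteq> Suc a \<Longrightarrow> p k = 0" and "p a + p (Suc a) = 1"
  shows "R0 p i = p i"
proof -
  let ?I = "{(k, l). min k l \<le> i \<and> i \<le> max k l} \<inter> {a, Suc a} \<times> {a, Suc a}"
  have R0_eq: "R0 p i = (\<Sum>(k, l) \<in> ?I. p k * p l / (1 + \<bar>real k - real l\<bar>))"
    by (rule R0_eq_sum_if_finite_support) (use assms(1) in auto)
  consider "i = a" | "i = Suc a" | "i \<noteq> a" "i \<noteq> Suc a"
    by blast
  then show ?thesis
  proof cases
    case 1
    then have "?I = {(a, a), (a, Suc a), (Suc a, a)}"
      by auto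
    then have "R0 p i = p a * (p a + p (Suc a))"
      using R0_eq by (simp add: field_simps)
    then show ?thesis
      using 1 assms(2) by simp
  next
    case 2
    then have "?I = {(Suc a, Suc a), (a, Suc a), (Suc a, a)}"
      by auto
    then have "R0 p i = p (Suc a) * (p a + p (Suc a))"
      using R0_eq by (simp add: field_simps)
    then show ?thesis
      using 2 assms(2) by simp
  next
    case 3
    then have "?I = {}"
      by auto
    then show ?thesis
      using R0_eq 3 assms(1) by simp
  qed
qed

lemma prob_seq_has_sum:
  assumes "prob_seq p"
  shows "(p has_sum 1) UNIV"
  using assms sums_nonneg_imp_has_sum by (auto simp: prob_seq_def)

lemma summable_on_divide_one_plus_dist:
  fixes p :: "nat \<Rightarrow> real"
  assumes "p summable_on UNIV" and "\<And>k. p k \<ge> 0"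
  shows "(\<lambda>l. p l / (1 + \<bar>real l - real a\<bar>)) summable_on A"
proof -
  have "p l / (1 + \<bar>real l - real a\<bar>) \<le> p l" for l
    using assms(2)[of l] by (simp add: divide_le_eq mult_le_cancel_left1)
  then show ?thesis
    using summable_on_comparison_test[OF summable_on_subset[OF assms(1)]] by (simp add: assms(2))
qed

lemma R0_at_lower_support_bound:
  fixes p :: "nat \<Rightarrow> real"
  assumes "p summable_on UNIV" and "\<And>k. p k \<ge> 0" and "\<And>k. k < a \<Longrightarrow> p k = 0"
  shows "R0 p a = p a * (p a + 2 * (\<Sum>\<^sub>\<infinity>l\<in>{a<..}. p l / (1 + \<bar>real l - real a\<bar>)))"
proof -
  define f where "f = (\<lambda>(k, l). p k * p l / (1 + \<bar>real k - real l\<bar>))"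
  define q where "q l = p l / (1 + \<bar>real l - real a\<bar>)" for l
  define Q where "Q = infsum q {a<..}"
  have q_sum: "(q has_sum Q) {a<..}"
    unfolding Q_def q_def using summable_on_divide_one_plus_dist[OF assms(1,2)] by simp
  have "{a..} = insert a {a<..}"
    by auto
  then have "(q has_sum (p a + Q)) {a..}"
    using has_sum_insert[OF _ q_sum, of a] by (simp add: q_def)
  then have "((f \<circ> Pair a) has_sum (p a * (p a + Q))) {a..}"
    using has_sum_cmult_right by (force simp: f_def q_def o_def abs_minus_commute)
  then have row: "(f has_sum (p a * (p a + Q))) (Pair a ` {a..})"
    by (simp add: has_sum_reindex inj_on_def)
  have "((f \<circ> (\<lambda>k. (k, a))) has_sum (p a * Q)) {a<..}"
    using has_sum_cmult_right[OF q_sum, of "p a"] by (simp add: f_def q_def o_def ac_simps)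
  then have column: "(f has_sum (p a * Q)) ((\<lambda>k. (k, a)) ` {a<..})"
    by (simp add: has_sum_reindex inj_on_def)
  have "(f has_sum (p a * (p a + 2 * Q))) (Pair a ` {a..} \<union> (\<lambda>k. (k, a)) ` {a<..})"
    using has_sum_Un_disjoint[OF row column] by (force simp: algebra_simps)
  moreover have "f (k, l) = 0" if "min k l < a" for k l
    using that assms(3) by (auto simp: f_def min_def split: if_splits)
  then have "(f has_sum s) (Pair a ` {a..} \<union> (\<lambda>k. (k, a)) ` {a<..}) \<longleftrightarrow>
      (f has_sum s) {(k, l). min k l \<le> a \<and> a \<le> max k l}" for s
    by (intro has_sum_cong_neutral) (auto simp: image_iff min_def max_def split: if_splits)
  ultimately have "(f has_sum (p a * (p a + 2 * Q))) {(k, l). min k l \<le> a \<and> a \<le> max k l}"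
    by blast
  then show ?thesis
    unfolding R0_def f_def Q_def q_def by (rule infsumI)
qed

lemma two_point_support_if_R0_fixed:
  assumes "prob_seq p" and "\<forall>i. R0 p i = p i"
  shows "\<exists>a. \<forall>k. k \<noteq> a \<and> k \<noteq> Suc a \<longrightarrow> p k = 0"
proof -
  have nonneg: "\<And>k. p k \<ge> 0" and total: "(p has_sum 1) UNIV"
    using assms(1) prob_seq_has_sum by (auto simp: prob_seq_def)
  have "\<exists>k. p k \<noteq> 0"
    using total has_sum_0[of UNIV p] has_sum_unique by force
  define a where "a = (LEAST k. p k \<noteq> 0)"
  have "p a \<noteq> 0" and below: "\<And>k. k < a \<Longrightarrow> p k = 0"
    unfolding a_def using LeastI_ex[OF \<open>\<exists>k. p k \<noteq> 0\<close>] not_less_Least by blast+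
  then have "p a > 0"
    using nonneg[of a] by linarith
  define q where "q l = p l / (1 + \<bar>real l - real a\<bar>)" for l
  define Q where "Q = infsum q {a<..}"
  have "(q has_sum Q) {a<..}"
    unfolding Q_def q_def
    using summable_on_divide_one_plus_dist[OF has_sum_imp_summable[OF total] nonneg] by simp
  then have weighted: "((\<lambda>l. 2 * q l) has_sum (2 * Q)) {a<..}"
    by (rule has_sum_cmult_right)
  have "p a = p a * (p a + 2 * Q)"
    using assms(2) R0_at_lower_support_bound[OF has_sum_imp_summable[OF total] nonneg below]
    unfolding Q_def q_def by metis
  then have "2 * Q = 1 - p a"
    using \<open>p a > 0\<close> by simp
  have tail: "(p has_sum (1 - p a)) {a<..}"
  proof -
    have "sum p {..a} = p a"
      using below by (simp add: lessThan_Suc_atMost[symmetric])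
    then have "(p has_sum p a) {..a}"
      by (simp add: has_sum_finiteI)
    from has_sum_Diff[OF total this] show ?thesis
      by (simp add: Compl_atMost flip: Compl_eq_Diff_UNIV)
  qed
  have dominated: "2 * q l \<le> p l" if "l \<in> {a<..}" for l
    using that nonneg[of l] mult_right_mono[of "1 + real a" "real l" "p l"]
    by (simp add: q_def field_simps)
  have "p k = 0" if "k \<noteq> a" "k \<noteq> Suc a" for k
  proof (rule ccontr)
    assume "p k \<noteq> 0"
    then have "p k > 0" and "\<not> k < a"
      using nonneg[of k] below by force+
    moreover have "2 < 1 + \<bar>real k - real a\<bar>"
      using \<open>\<not> k < a\<close> that by linarith
    ultimately have "2 * q k < p k"
      using mult_strict_right_mono[of "1 + real a" "real k" "p k"] by (simp add: q_def field_simps)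
    then have "2 * Q < 1 - p a"
      using has_sum_strict_mono[OF weighted tail dominated, of k] \<open>\<not> k < a\<close> that(1) by simp
    then show False
      using \<open>2 * Q = 1 - p a\<close> by simp
  qed
  then show ?thesis
    by blast
qed

lemma mean_condition_iff_two_point_support:
  fixes p :: "nat \<Rightarrow> real"
  assumes "prob_seq p"
  shows "(summable (\<lambda>k. real k * p k) \<and>
     (let m = (\<Sum>k. real k * p k) in
        p (nat \<lfloor>m\<rfloor>) = of_int \<lfloor>m\<rfloor> + 1 - m \<and>
        p (nat \<lceil>m\<rceil>) = m + 1 - of_int \<lceil>m\<rceil> \<and>
        (\<forall>k. k \<noteq> nat \<lfloor>m\<rfloor> \<and> k \<noteq> nat \<lceil>m\<rceil> \<longrightarrow> p k = 0)))
   \<longleftrightarrow> (\<exists>a. \<forall>k. k \<noteq> a \<and> k \<noteq> Suc a \<longrightarrow> p k = 0)" (is "?mean_law \<longleftrightarrow> ?two_point")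
proof
  assume law: ?mean_law
  define m where "m = (\<Sum>k. real k * p k)"
  have "m \<ge> 0"
    unfolding m_def using law assms by (intro suminf_nonneg) (auto simp: prob_seq_def)
  then have "nat \<lceil>m\<rceil> = nat \<lfloor>m\<rfloor> \<or> nat \<lceil>m\<rceil> = Suc (nat \<lfloor>m\<rfloor>)"
    using ceiling_diff_floor_le_1[of m] floor_le_ceiling[of m] by linarith
  then show ?two_point
    using law unfolding m_def[symmetric] Let_def by metis
next
  assume ?two_point
  then obtain a where support: "\<And>k. k \<noteq> a \<Longrightarrow> k \<noteq> Suc a \<Longrightarrow> p k = 0"
    by blast
  define t where "t = p (Suc a)"
  have pa: "p a = 1 - t"
    using prob_seq_two_point_mass[of p a] assms support by (simp add: t_def)
  have "0 \<le> t" "t \<le> 1"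
    using assms pa by (auto simp: prob_seq_def t_def) (metis diff_ge_0_iff_ge)
  have "(\<lambda>k. real k * p k) sums (real a * p a + real (Suc a) * t)"
    using sums_two_point_support[of a "\<lambda>k. real k * p k"] support by (simp add: t_def)
  then have "(\<lambda>k. real k * p k) sums (real a + t)"
    by (simp add: pa algebra_simps)
  then have summable: "summable (\<lambda>k. real k * p k)" and mean: "(\<Sum>k. real k * p k) = real a + t"
    by (auto simp: sums_iff)
  consider "t = 0" | "0 < t" "t < 1" | "t = 1"
    using \<open>0 \<le> t\<close> \<open>t \<le> 1\<close> by linarith
  then show ?mean_law
  proof cases
    case 1
    then show ?thesis
      using summable support pa unfolding mean Let_def by (auto simp: t_def)
  next
    case 2
    then have "\<lfloor>real a + t\<rfloor> = int a" and "\<lceil>real a + t\<rceil> = int a + 1"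
      by (auto simp: floor_eq_iff ceiling_eq_iff)
    then show ?thesis
      using summable support pa unfolding mean Let_def by (auto simp: t_def nat_add_distrib)
  next
    case 3
    then have "p k = 0" if "k \<noteq> Suc a" for k
      using that support pa by (cases "k = a") auto
    then show ?thesis
      using summable 3 unfolding mean Let_def by (auto simp: t_def nat_add_distrib)
  qed
qed

theorem proposition4:
  fixes p :: "nat \<Rightarrow> real"
  assumes "prob_seq p"
  shows "(\<forall>i. R0 p i = p i) \<longleftrightarrow>
    (summable (\<lambda>k. real k * p k) \<and>
     (let m = (\<Sum>k. real k * p k) in
        p (nat \<lfloor>m\<rfloor>) = of_int \<lfloor>m\<rfloor> + 1 - m \<and>
        p (nat \<lceil>m\<rceil>) = m + 1 - of_int \<lceil>m\<rceil> \<and>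
        (\<forall>k. k \<noteq> nat \<lfloor>m\<rfloor> \<and> k \<noteq> nat \<lceil>m\<rceil> \<longrightarrow> p k = 0)))"
  unfolding mean_condition_iff_two_point_support[OF assms]
proof
  assume "\<forall>i. R0 p i = p i"
  then show "\<exists>a. \<forall>k. k \<noteq> a \<and> k \<noteq> Suc a \<longrightarrow> p k = 0"
    by (rule two_point_support_if_R0_fixed[OF assms])
next
  assume "\<exists>a. \<forall>k. k \<noteq> a \<and> k \<noteq> Suc a \<longrightarrow> p k = 0"
  then obtain a where support: "\<And>k. k \<noteq> a \<Longrightarrow> k \<noteq> Suc a \<Longrightarrow> p k = 0"
    by blast
  then show "\<forall>i. R0 p i = p i"
    using R0_fixed_if_two_point_support support prob_seq_two_point_mass[of p a] assms by blast
qed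

end
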